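(* For all integers $k,l\ge2$, $La^*([k]\times[l],\vee_3)=2(k+l)-4$.
   Context: $[k]\times[l]$ is ordered coordinatewise. $\vee_3$ is the poset on four elements $a,b_1,b_2,b_3$ whose only relations are $a<b_i$, $i=1,2,3$. For posets $P,R$, $P$ is a strong subposet of $R$ if there is an injection $i:P\to R$ with $p\le_P p'\iff i(p)\le_R i(p')$. A subset $F\subseteq Q$ is strong $P$-free if $P$ is not a strong subposet of $F$ with the induced order; $La^*(Q,P)$ is the maximum size of a strong $P$-free subset of $Q$. *)

theory Defs
  imports Main
begin

definition strong_subposet ::
  "'a set \<Rightarrow> ('a \<Rightarrow> 'a \<Rightarrow> bool) \<Rightarrow> 'b set \<Rightarrow> ('b \<Rightarrow> 'b \<Rightarrow> bool) \<Rightarrow> bool" where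
  "strong_subposet P leP R leR \<longleftrightarrow>
     (\<exists>i. inj_on i P \<and> i ` P \<subseteq> R \<and>
          (\<forall>p\<in>P. \<forall>p'\<in>P. leP p p' \<longleftrightarrow> leR (i p) (i p')))"

definition strong_free ::
  "'a set \<Rightarrow> ('a \<Rightarrow> 'a \<Rightarrow> bool) \<Rightarrow> 'b set \<Rightarrow> ('b \<Rightarrow> 'b \<Rightarrow> bool) \<Rightarrow> bool" where
  "strong_free P leP F leQ \<longleftrightarrow> \<not> strong_subposet P leP F leQ"

definition La_star ::
  "'b set \<Rightarrow> ('b \<Rightarrow> 'b \<Rightarrow> bool) \<Rightarrow> 'a set \<Rightarrow> ('a \<Rightarrow> 'a \<Rightarrow> bool) \<Rightarrow> nat" where
  "La_star Q leQ P leP = Max {card F | F. F \<subseteq> Q \<and> strong_free P leP F leQ}"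

definition grid :: "nat \<Rightarrow> nat \<Rightarrow> (nat \<times> nat) set" where
  "grid k l = {1..k} \<times> {1..l}"

definition grid_le :: "nat \<times> nat \<Rightarrow> nat \<times> nat \<Rightarrow> bool" where
  "grid_le x y \<longleftrightarrow> fst x \<le> fst y \<and> snd x \<le> snd y"

text \<open>The poset V_3: a = 0, b_i = i (i = 1,2,3); only relations a < b_i (plus reflexivity).\<close>
definition vee3 :: "nat set" where
  "vee3 = {0, 1, 2, 3}"

definition vee3_le :: "nat \<Rightarrow> nat \<Rightarrow> bool" where
  "vee3_le x y \<longleftrightarrow> x = y \<or> x = 0"

end

theory Submission
  imports Defs "HOL-Library.Product_Order"
begin

text \<open>Under the product order a strong copy of V_3 is an element lying strictly below three
  pairwise incomparable ones. The boundary of the grid is the union of two chains (left column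
  with top row, bottom row with right column), so it contains no V_3, which gives the lower bound.
  For the upper bound we induct on k + l. If the bottom row holds at most two points of F we
  delete it. Otherwise let (x0, 1) be its leftmost point and (x2, 1) one with x2 \<ge> x0 + 2,
  and merge columns x0 and x0 + 1. This keeps F free of V_3, since a V_3 whose apex comes from
  column x0 + 1 can be re-rooted at (x0, 1); and it loses at most two points, since two rows
  y < y' above row 1 occupied in both columns would give the V_3 with apex (x0, 1) over
  (x0, y'), (x0 + 1, y) and (x2, 1).\<close>

abbreviation incomparable :: "'a::ord \<Rightarrow> 'a \<Rightarrow> bool" where
  "incomparable x y \<equiv> \<not> x \<le> y \<and> \<not> y \<le> x"

definition contains_vee3 :: "'a::order set \<Rightarrow> bool" where
  "contains_vee3 F \<longleftrightarrow> (\<exists>a\<in>F. \<exists>b1\<in>F. \<exists>b2\<in>F. \<exists>b3\<in>F. a < b1 \<and> a < b2 \<and> a < b3 \<and>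
     incomparable b1 b2 \<and> incomparable b1 b3 \<and> incomparable b2 b3)"

lemma contains_vee3I:
  assumes "a \<in> F" "b1 \<in> F" "b2 \<in> F" "b3 \<in> F" and "a < b1" "a < b2" "a < b3"
    and "incomparable b1 b2" "incomparable b1 b3" "incomparable b2 b3"
  shows "contains_vee3 F"
  using assms unfolding contains_vee3_def by blast

lemma contains_vee3E:
  assumes "contains_vee3 F"
  obtains a b1 b2 b3 where "a \<in> F" "b1 \<in> F" "b2 \<in> F" "b3 \<in> F" and "a < b1" "a < b2" "a < b3"
    and "incomparable b1 b2" "incomparable b1 b3" "incomparable b2 b3"
  using assms unfolding contains_vee3_def by blast

lemma strong_subposet_vee3_iff:
  fixes F :: "'a::order set"
  shows "strong_subposet vee3 vee3_le F (\<le>) \<longleftrightarrow> contains_vee3 F"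
proof
  assume "strong_subposet vee3 vee3_le F (\<le>)"
  then obtain i where inj: "inj_on i vee3" and into: "i ` vee3 \<subseteq> F"
    and le: "\<And>p q. p \<in> vee3 \<Longrightarrow> q \<in> vee3 \<Longrightarrow> vee3_le p q \<longleftrightarrow> i p \<le> i q"
    unfolding strong_subposet_def by auto
  have apex: "i 0 < i n" if "n \<in> {1, 2, 3}" for n
    using le[of 0 n] inj_onD[OF inj, of 0 n] that
    by (auto simp: vee3_def vee3_le_def order.strict_iff_order)
  have anti: "\<not> i m \<le> i n" if "m \<in> {1, 2, 3}" "n \<in> {1, 2, 3}" "m \<noteq> n" for m n
    using le[of m n] that by (auto simp: vee3_def vee3_le_def)
  have "i 0 \<in> F" "i 1 \<in> F" "i 2 \<in> F" "i 3 \<in> F"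
    using into by (auto simp: vee3_def)
  then show "contains_vee3 F"
    by (rule contains_vee3I) (simp_all add: apex anti)
next
  assume "contains_vee3 F"
  then obtain a b1 b2 b3 where mem: "a \<in> F" "b1 \<in> F" "b2 \<in> F" "b3 \<in> F"
    and apex: "a < b1" "a < b2" "a < b3"
    and anti: "incomparable b1 b2" "incomparable b1 b3" "incomparable b2 b3"
    by (rule contains_vee3E)
  have "\<not> b1 \<le> a" "\<not> b2 \<le> a" "\<not> b3 \<le> a"
    using apex by auto
  moreover have "distinct [a, b1, b2, b3]"
    using apex anti by auto
  then have "inj_on (nth [a, b1, b2, b3]) vee3"
    by (rule inj_on_nth) (simp add: vee3_def)
  ultimately show "strong_subposet vee3 vee3_le F (\<le>)"
    unfolding strong_subposet_def using mem apex anti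
    by (intro exI[of _ "nth [a, b1, b2, b3]"]) (simp add: vee3_def vee3_le_def less_imp_le)
qed

lemma contains_vee3_mono: "contains_vee3 F \<Longrightarrow> F \<subseteq> G \<Longrightarrow> contains_vee3 G"
  unfolding contains_vee3_def by blast

lemma contains_vee3_image_embedding:
  assumes "contains_vee3 (f ` A)"
    and embedding: "\<And>p q. p \<in> A \<Longrightarrow> q \<in> A \<Longrightarrow> f p \<le> f q \<longleftrightarrow> p \<le> q"
  shows "contains_vee3 A"
proof -
  from assms(1) obtain a b1 b2 b3 where mem: "a \<in> A" "b1 \<in> A" "b2 \<in> A" "b3 \<in> A"
    and "f a < f b1" "f a < f b2" "f a < f b3"
    and "incomparable (f b1) (f b2)" "incomparable (f b1) (f b3)" "incomparable (f b2) (f b3)"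
    by (elim contains_vee3E) blast
  with mem have "a < b1" "a < b2" "a < b3"
    and "incomparable b1 b2" "incomparable b1 b3" "incomparable b2 b3"
    by (simp_all add: embedding less_le_not_le)
  with mem show ?thesis
    by (intro contains_vee3I)
qed

lemma contains_vee3_union_chains:
  assumes "Complete_Partial_Order.chain (\<le>) C1" and "Complete_Partial_Order.chain (\<le>) C2"
  shows "\<not> contains_vee3 (C1 \<union> C2)"
proof
  assume "contains_vee3 (C1 \<union> C2)"
  then obtain b1 b2 b3 where "b1 \<in> C1 \<union> C2" "b2 \<in> C1 \<union> C2" "b3 \<in> C1 \<union> C2"
    and "incomparable b1 b2" "incomparable b1 b3" "incomparable b2 b3"
    by (elim contains_vee3E) blast
  with assms show False
    unfolding chain_def by blast
qed

definition merge_cols :: "nat \<Rightarrow> nat \<times> nat \<Rightarrow> nat \<times> nat" where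
  "merge_cols x0 p = (if fst p \<le> x0 then fst p else fst p - 1, snd p)"

lemma merge_cols_mono: "p \<le> q \<Longrightarrow> merge_cols x0 p \<le> merge_cols x0 q"
  by (auto simp: less_eq_prod_def merge_cols_def)

lemma merge_cols_reflect:
  "merge_cols x0 p \<le> merge_cols x0 q \<Longrightarrow> fst p \<noteq> Suc x0 \<Longrightarrow> p \<le> q"
  by (auto simp: less_eq_prod_def merge_cols_def split: if_splits)

lemma contains_vee3_merge_cols:
  assumes "contains_vee3 (merge_cols x0 ` F)" and "(x0, y0) \<in> F" and "\<forall>p\<in>F. y0 \<le> snd p"
  shows "contains_vee3 F"
proof -
  let ?m = "merge_cols x0"
  from assms(1) obtain a b1 b2 b3 where mem: "a \<in> F" "b1 \<in> F" "b2 \<in> F" "b3 \<in> F"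
    and apex: "?m a < ?m b1" "?m a < ?m b2" "?m a < ?m b3"
    and anti: "incomparable (?m b1) (?m b2)" "incomparable (?m b1) (?m b3)"
      "incomparable (?m b2) (?m b3)"
    by (elim contains_vee3E) blast
  from anti have anti_F: "incomparable b1 b2" "incomparable b1 b3" "incomparable b2 b3"
    using merge_cols_mono by blast+
  show ?thesis
  proof (cases "fst a = Suc x0")
    case True
    have below: "(x0, y0) < b" if "b \<in> F" "?m a < ?m b" for b
    proof -
      have "(x0, y0) \<le> b"
        using that True assms(3)
        by (auto simp: less_le less_eq_prod_def merge_cols_def split: if_splits)
      moreover have "b \<noteq> (x0, y0)"
        using that True assms(3) mem(1)
        by (auto simp: less_le less_eq_prod_def merge_cols_def prod_eq_iff)
      ultimately show ?thesis by (simp add: less_le)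
    qed
    from mem apex have "(x0, y0) < b1" "(x0, y0) < b2" "(x0, y0) < b3"
      by (simp_all add: below)
    with assms(2) mem anti_F show ?thesis
      by (intro contains_vee3I)
  next
    case False
    then have "a < b" if "?m a < ?m b" for b
      using that merge_cols_reflect by (metis less_le)
    with apex have "a < b1" "a < b2" "a < b3"
      by simp_all
    with mem anti_F show ?thesis
      by (intro contains_vee3I)
  qed
qed

definition doubled_rows :: "(nat \<times> nat) set \<Rightarrow> nat \<Rightarrow> nat set" where
  "doubled_rows F x0 = {y. (x0, y) \<in> F \<and> (Suc x0, y) \<in> F}"

lemma card_le_card_merge_cols:
  assumes "finite F"
  shows "card F \<le> card (merge_cols x0 ` F) + card (doubled_rows F x0)"
proof -
  define D where "D = (\<lambda>y. (Suc x0, y)) ` doubled_rows F x0"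
  have "D \<subseteq> F"
    by (auto simp: D_def doubled_rows_def)
  have "inj_on (merge_cols x0) (F - D)"
  proof (rule inj_onI)
    fix p q assume p: "p \<in> F - D" and q: "q \<in> F - D" and eq: "merge_cols x0 p = merge_cols x0 q"
    show "p = q"
    proof (rule ccontr)
      assume "p \<noteq> q"
      with eq have "{p, q} = {(x0, snd p), (Suc x0, snd p)}"
        by (cases p; cases q) (auto simp: merge_cols_def doubleton_eq_iff split: if_splits)
      moreover from p q have "{p, q} \<subseteq> F"
        by blast
      ultimately have "snd p \<in> doubled_rows F x0" and "(Suc x0, snd p) \<in> {p, q}"
        by (auto simp: doubled_rows_def)
      moreover have "(Suc x0, snd p) \<in> D"
        using \<open>snd p \<in> doubled_rows F x0\<close> by (simp add: D_def)
      ultimately show False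
        using p q by auto
    qed
  qed
  then have "card (F - D) = card (merge_cols x0 ` (F - D))"
    by (rule card_image[symmetric])
  also have "\<dots> \<le> card (merge_cols x0 ` F)"
    using assms by (intro card_mono) auto
  finally have "card (F - D) \<le> card (merge_cols x0 ` F)" .
  moreover have "card D = card (doubled_rows F x0)"
    by (simp add: D_def card_image inj_on_def)
  moreover have "card F \<le> card (F - D) + card D"
    using card_Un_le[of "F - D" D] \<open>D \<subseteq> F\<close> by (simp add: Un_absorb2)
  ultimately show ?thesis
    by linarith
qed

lemma card_doubled_rows_le:
  fixes F :: "(nat \<times> nat) set"
  assumes free: "\<not> contains_vee3 F" and "finite F"
    and corner: "(x0, y0) \<in> F" and far: "(x2, y0) \<in> F" "Suc x0 < x2"
    and above: "\<forall>p\<in>F. y0 \<le> snd p"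
  shows "card (doubled_rows F x0) \<le> 2"
proof -
  define doubled where "doubled = doubled_rows F x0"
  have "finite doubled"
    using finite_imageI[OF \<open>finite F\<close>, of snd]
    by (rule rev_finite_subset) (force simp: doubled_def doubled_rows_def)
  have collapse: "y = y'" if "y \<in> doubled - {y0}" "y' \<in> doubled - {y0}" "y < y'" for y y'
  proof -
    have "y0 \<le> y"
      using that(1) above by (auto simp: doubled_def doubled_rows_def)
    with that far have "contains_vee3 F"
      by (intro contains_vee3I[OF corner _ _ far(1), of "(x0, y')" "(Suc x0, y)"])
         (auto simp: doubled_def doubled_rows_def less_le)
    with free show ?thesis by blast
  qed
  have "\<forall>y\<in>doubled - {y0}. \<forall>y'\<in>doubled - {y0}. y = y'"
  proof (intro ballI)
    fix y y' assume "y \<in> doubled - {y0}" "y' \<in> doubled - {y0}"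
    then show "y = y'"
      using collapse by (cases y y' rule: linorder_cases) auto
  qed
  then have "card (doubled - {y0}) \<le> 1"
    using \<open>finite doubled\<close> by (simp add: card_le_Suc0_iff_eq)
  moreover have "card doubled \<le> card (doubled - {y0}) + 1"
    by (simp add: card_Diff_singleton_if) arith
  ultimately show ?thesis unfolding doubled_def by linarith
qed

lemma finite_grid: "finite (grid k l)"
  by (simp add: grid_def)

lemma card_grid: "card (grid k l) = k * l"
  by (simp add: grid_def)

lemma grid_remove_bottom_row:
  assumes sub: "F \<subseteq> grid k l" and free: "\<not> contains_vee3 F"
    and small: "card {p \<in> F. snd p = 1} \<le> 2"
  shows "\<exists>G \<subseteq> grid k (l - 1). \<not> contains_vee3 G \<and> card F \<le> card G + 2"
proof -
  define R where "R = {p \<in> F. snd p = 1}"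
  define shift :: "nat \<times> nat \<Rightarrow> nat \<times> nat" where "shift = (\<lambda>(x, y). (x, y - 1))"
  have high: "2 \<le> snd p" if "p \<in> F - R" for p
    using that sub by (auto simp: R_def grid_def)
  have embedding: "shift p \<le> shift q \<longleftrightarrow> p \<le> q" if "p \<in> F - R" "q \<in> F - R" for p q
    using high[OF that(1)] high[OF that(2)]
    by (auto simp: shift_def less_eq_prod_def split: prod.splits)
  then have "inj_on shift (F - R)"
    by (intro inj_onI) (metis order.antisym order.refl)
  moreover have "\<not> contains_vee3 (shift ` (F - R))"
    using free contains_vee3_image_embedding[OF _ embedding] contains_vee3_mono by blast
  moreover have "shift ` (F - R) \<subseteq> grid k (l - 1)"
    using sub high by (force simp: shift_def grid_def)
  moreover have "finite F"
    using sub finite_grid by (rule finite_subset)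
  then have "card F \<le> card (F - R) + 2"
    using small card_Diff_subset[of R F] card_mono[of F R] by (force simp: R_def)
  ultimately show ?thesis
    by (metis card_image)
qed

lemma grid_merge_columns:
  assumes sub: "F \<subseteq> grid k l" and free: "\<not> contains_vee3 F"
    and large: "3 \<le> card {p \<in> F. snd p = 1}"
  shows "3 \<le> k \<and> (\<exists>G \<subseteq> grid (k - 1) l. \<not> contains_vee3 G \<and> card F \<le> card G + 2)"
proof -
  define X where "X = {x. (x, 1) \<in> F}"
  have "finite F"
    using sub finite_grid by (rule finite_subset)
  have "{p \<in> F. snd p = 1} = (\<lambda>x. (x, 1)) ` X"
    by (force simp: X_def)
  then have "3 \<le> card X"
    using large by (simp add: card_image inj_on_def)
  then have "finite X" "X \<noteq> {}"
    by (auto intro: card_ge_0_finite)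
  define x0 where "x0 = Min X"
  have "x0 \<in> X" and leftmost: "\<forall>x\<in>X. x0 \<le> x"
    using \<open>finite X\<close> \<open>X \<noteq> {}\<close> by (simp_all add: x0_def)
  then have corner: "(x0, 1) \<in> F"
    by (simp add: X_def)
  obtain x2 where far: "(x2, 1) \<in> F" "Suc x0 < x2"
  proof -
    have "\<not> X \<subseteq> {x0, Suc x0}"
      using \<open>3 \<le> card X\<close> card_mono[of "{x0, Suc x0}" X] by auto
    then show thesis
      using that leftmost by (force simp: X_def)
  qed
  have above: "\<forall>p\<in>F. 1 \<le> snd p" and "1 \<le> x0" "x2 \<le> k"
    using sub corner far by (auto simp: grid_def)
  have "\<not> contains_vee3 (merge_cols x0 ` F)"
    using free contains_vee3_merge_cols corner above by blast
  moreover have "merge_cols x0 ` F \<subseteq> grid (k - 1) l"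
    using sub \<open>1 \<le> x0\<close> \<open>x2 \<le> k\<close> far by (force simp: merge_cols_def grid_def)
  moreover have "card F \<le> card (merge_cols x0 ` F) + 2"
    using card_le_card_merge_cols[OF \<open>finite F\<close>, of x0]
      card_doubled_rows_le[OF free \<open>finite F\<close> corner far above] by linarith
  ultimately show ?thesis
    using \<open>1 \<le> x0\<close> \<open>x2 \<le> k\<close> far by auto
qed

lemma card_vee3_free_grid_le:
  assumes "F \<subseteq> grid k l" and "\<not> contains_vee3 F" and "1 \<le> k" "1 \<le> l" "3 \<le> k + l"
  shows "card F + 4 \<le> 2 * (k + l)"
  using assms
proof (induction "k + l" arbitrary: k l F rule: less_induct)
  case less
  show ?case
  proof (cases "k = 1 \<or> l = 1")
    case True
    have "card F \<le> k * l"
      using card_mono[OF finite_grid less.prems(1)] by (simp add: card_grid)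
    with True have "card F + 1 \<le> k + l"
      by auto
    with less.prems(5) show ?thesis
      by arith
  next
    case False
    consider "card {p \<in> F. snd p = 1} \<le> 2" | "3 \<le> card {p \<in> F. snd p = 1}"
      by linarith
    then show ?thesis
    proof cases
      case 1
      then obtain G where G: "G \<subseteq> grid k (l - 1)" "\<not> contains_vee3 G" and "card F \<le> card G + 2"
        using grid_remove_bottom_row[OF less.prems(1,2) 1] by blast
      moreover have "card G + 4 \<le> 2 * (k + (l - 1))"
        by (rule less.hyps[OF _ G]) (use False less.prems in auto)
      ultimately show ?thesis
        using less.prems(4) by arith
    next
      case 2
      then obtain G where "3 \<le> k" and G: "G \<subseteq> grid (k - 1) l" "\<not> contains_vee3 G"
        and "card F \<le> card G + 2"
        using grid_merge_columns[OF less.prems(1,2) 2] by blast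
      moreover have "card G + 4 \<le> 2 * ((k - 1) + l)"
        by (rule less.hyps[OF _ G]) (use \<open>3 \<le> k\<close> less.prems in auto)
      ultimately show ?thesis
        by arith
    qed
  qed
qed

definition grid_boundary :: "nat \<Rightarrow> nat \<Rightarrow> (nat \<times> nat) set" where
  "grid_boundary k l = grid k l - {2..<k} \<times> {2..<l}"

lemma card_grid_boundary:
  assumes "2 \<le> k" "2 \<le> l"
  shows "card (grid_boundary k l) = 2 * (k + l) - 4"
proof -
  have "card (grid_boundary k l) = k * l - (k - 2) * (l - 2)"
    unfolding grid_boundary_def
    by (subst card_Diff_subset) (auto simp: grid_def card_grid[unfolded grid_def])
  also have "\<dots> = 2 * (k + l) - 4"
  proof -
    obtain a b where "k = a + 2" "l = b + 2"
      using assms by (metis le_add_diff_inverse2)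
    then show ?thesis by (simp add: algebra_simps)
  qed
  finally show ?thesis .
qed

lemma grid_boundary_vee3_free: "\<not> contains_vee3 (grid_boundary k l)"
proof -
  define upper where "upper = {p \<in> grid k l. fst p = 1 \<or> snd p = l}"
  define lower where "lower = {p \<in> grid k l. snd p = 1 \<or> fst p = k}"
  have "Complete_Partial_Order.chain (\<le>) upper" "Complete_Partial_Order.chain (\<le>) lower"
    by (auto simp: chain_def upper_def lower_def grid_def less_eq_prod_def)
  moreover have "grid_boundary k l \<subseteq> upper \<union> lower"
    by (auto simp: grid_boundary_def upper_def lower_def grid_def)
  ultimately show ?thesis
    using contains_vee3_union_chains contains_vee3_mono by blast
qed

lemma La_star_eqI:
  assumes "finite Q" and "F \<subseteq> Q" "strong_free P leP F leQ" "card F = n"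
    and "\<And>G. G \<subseteq> Q \<Longrightarrow> strong_free P leP G leQ \<Longrightarrow> card G \<le> n"
  shows "La_star Q leQ P leP = n"
  unfolding La_star_def
proof (rule Max_eqI)
  have "{card G |G. G \<subseteq> Q \<and> strong_free P leP G leQ} \<subseteq> card ` Pow Q"
    by blast
  then show "finite {card G |G. G \<subseteq> Q \<and> strong_free P leP G leQ}"
    by (rule finite_subset) (simp add: assms(1))
next
  fix m assume "m \<in> {card G |G. G \<subseteq> Q \<and> strong_free P leP G leQ}"
  then obtain G where "m = card G" "G \<subseteq> Q" "strong_free P leP G leQ"
    by blast
  then show "m \<le> n"
    by (simp add: assms(5))
next
  show "n \<in> {card G |G. G \<subseteq> Q \<and> strong_free P leP G leQ}"
    using assms(2-4) by blast
qed

lemma grid_le_eq_less_eq: "grid_le = (\<le>)"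
  by (simp add: fun_eq_iff grid_le_def less_eq_prod_def)

theorem theorem1p5:
  fixes k l :: nat
  assumes "k \<ge> 2" and "l \<ge> 2"
  shows "La_star (grid k l) grid_le vee3 vee3_le = 2 * (k + l) - 4"
proof -
  have free_iff: "strong_free vee3 vee3_le F grid_le \<longleftrightarrow> \<not> contains_vee3 F" for F
    by (simp add: strong_free_def grid_le_eq_less_eq strong_subposet_vee3_iff)
  show ?thesis
  proof (rule La_star_eqI[OF finite_grid])
    show "grid_boundary k l \<subseteq> grid k l"
      by (auto simp: grid_boundary_def)
    show "strong_free vee3 vee3_le (grid_boundary k l) grid_le"
      by (simp add: free_iff grid_boundary_vee3_free)
    show "card (grid_boundary k l) = 2 * (k + l) - 4"
      using assms by (rule card_grid_boundary)
    show "card G \<le> 2 * (k + l) - 4" if "G \<subseteq> grid k l" "strong_free vee3 vee3_le G grid_le" for G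
      using card_vee3_free_grid_le[of G k l] that assms by (simp add: free_iff)
  qed
qed

end
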